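(* For $[0,1]$ valuation functions, there is an absolute constant $c>0$ such that for every $n\ge1$, random priority on $n$ agents and $n$ items satisfies $ar(RP)\ge c/\sqrt n$.
   Context: Agents $N=\{1,\dots,n\}$, items $M=\{1,\dots,n\}$, outcomes are bijections $\mu$ ($O$ the set of outcomes). A $[0,1]$ valuation function is an injective $u_i:M\to[0,1]$ with $\max_j u_i(j)=1$ (the minimum need not be $0$); $V^n$ is the set of profiles of such functions. Random priority (RP) picks a uniformly random ordering of the agents and in that order gives each agent its most preferred still-unassigned item. $ar(J)=\inf_{\mathbf u\in V^n}\mathbb E[\sum_i u_i(J(\mathbf u)_i)]/\max_{\mu\in O}\sum_i u_i(\mu_i)$. *)

theory Defs
  imports Complex_Main
begin

text \<open>Agents and items are both indexed by {..<n} (i.e. 0,...,n-1).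
 A valuation profile is u :: nat => nat => real, with u i j the value of agent i for item j.\<close>

definition valuation :: "nat \<Rightarrow> (nat \<Rightarrow> real) \<Rightarrow> bool" where
  "valuation n v \<longleftrightarrow> inj_on v {..<n} \<and> (\<forall>j<n. 0 \<le> v j \<and> v j \<le> 1)
     \<and> (\<exists>j<n. v j = 1)"

definition profiles :: "nat \<Rightarrow> (nat \<Rightarrow> nat \<Rightarrow> real) set" where
  "profiles n = {u. \<forall>i<n. valuation n (u i)}"

definition outcomes :: "nat \<Rightarrow> (nat \<Rightarrow> nat) set" where
  "outcomes n = {\<mu>. bij_betw \<mu> {..<n} {..<n}}"

definition welfare :: "nat \<Rightarrow> (nat \<Rightarrow> nat \<Rightarrow> real) \<Rightarrow> (nat \<Rightarrow> nat) \<Rightarrow> real" where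
  "welfare n u \<mu> = (\<Sum>i<n. u i (\<mu> i))"

definition opt_welfare :: "nat \<Rightarrow> (nat \<Rightarrow> nat \<Rightarrow> real) \<Rightarrow> real" where
  "opt_welfare n u = Max (welfare n u ` outcomes n)"

fun serial_dict :: "(nat \<Rightarrow> nat \<Rightarrow> real) \<Rightarrow> nat set \<Rightarrow> nat list \<Rightarrow> (nat \<Rightarrow> nat) \<Rightarrow> (nat \<Rightarrow> nat)" where
  "serial_dict u avail [] \<mu> = \<mu>"
| "serial_dict u avail (i # is) \<mu> =
     (let j = (ARG_MAX (u i) j. j \<in> avail) in serial_dict u (avail - {j}) is (\<mu>(i := j)))"

definition orderings :: "nat \<Rightarrow> nat list set" where
  "orderings n = {xs. distinct xs \<and> set xs = {..<n}}"

definition RP :: "nat \<Rightarrow> (nat \<Rightarrow> nat \<Rightarrow> real) \<Rightarrow> nat list \<Rightarrow> (nat \<Rightarrow> nat)" where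
  "RP n u \<sigma> = serial_dict u {..<n} \<sigma> id"

definition RP_expected_welfare :: "nat \<Rightarrow> (nat \<Rightarrow> nat \<Rightarrow> real) \<Rightarrow> real" where
  "RP_expected_welfare n u =
     (\<Sum>\<sigma>\<in>orderings n. welfare n u (RP n u \<sigma>)) / real (card (orderings n))"

definition approx_ratio_RP :: "nat \<Rightarrow> real" where
  "approx_ratio_RP n = (INF u\<in>profiles n. RP_expected_welfare n u / opt_welfare n u)"

end

theory Submission
  imports Defs "HOL-Library.FuncSet" "HOL-Combinatorics.Transposition"
begin

text \<open>
  Fix a profile u, an arbitrary assignment \<mu> and a number m < n.  In any ordering, after the
  first m agents have picked, at most 2m agents of \<mu> are spoiled (they were among the first m,
  or their \<mu>-item is gone), so the remaining agents still carry welfare W(\<mu>) - 2m.  A counting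
  argument, which inserts agent i at every possible position into an ordering of the other
  agents, shows that an agent finds its \<mu>-item available at its own turn at least (m+1)/n
  times as often as it finds it available "late" in this sense.  Since an agent whose \<mu>-item
  is available at its turn gets at least that value, (m+1)(W(\<mu>) - 2m) \<le> n E, where E is the
  expected welfare of random priority.  Choosing m \<approx> \<surd>n and using E \<ge> 1 (the first agent
  obtains value 1) yields OPT \<le> 3\<surd>n E.
\<close>

lemma arg_max_on_finite:
  fixes f :: "'a \<Rightarrow> 'b::linorder"
  assumes "finite S" "S \<noteq> {}"
  shows "(ARG_MAX f x. x \<in> S) \<in> S \<and> (\<forall>y\<in>S. f y \<le> f (ARG_MAX f x. x \<in> S))"
proof -
  have "Max (f ` S) \<in> f ` S" using assms by simp
  then obtain x where x: "x \<in> S" "f x = Max (f ` S)" by auto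
  then have max: "\<forall>y\<in>S. f y \<le> f x" using assms(1) by simp
  show ?thesis
    by (rule arg_maxI[where P = "\<lambda>x. x \<in> S" and Q = "\<lambda>a. a \<in> S \<and> (\<forall>y\<in>S. f y \<le> f a)"])
       (use x(1) max in \<open>auto simp: not_less\<close>)
qed

fun remaining :: "(nat \<Rightarrow> nat \<Rightarrow> real) \<Rightarrow> nat set \<Rightarrow> nat list \<Rightarrow> nat set" where
  "remaining u A [] = A"
| "remaining u A (i # is) = remaining u (A - {ARG_MAX (u i) j. j \<in> A}) is"

lemma serial_dict_append:
  "serial_dict u A (xs @ ys) \<mu> = serial_dict u (remaining u A xs) ys (serial_dict u A xs \<mu>)"
  by (induction xs arbitrary: A \<mu>) (auto simp: Let_def)

lemma serial_dict_notin: "i \<notin> set xs \<Longrightarrow> serial_dict u A xs \<mu> i = \<mu> i"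
  by (induction xs arbitrary: A \<mu>) (auto simp: Let_def)

lemma serial_dict_turn:
  "i \<notin> set post \<Longrightarrow> serial_dict u A (pre @ i # post) \<mu> i = (ARG_MAX (u i) j. j \<in> remaining u A pre)"
  by (simp add: serial_dict_append serial_dict_notin Let_def)

lemma remaining_subset: "remaining u A xs \<subseteq> A"
  by (induction xs arbitrary: A) (simp, fastforce)

lemma remaining_append: "remaining u A (xs @ ys) = remaining u (remaining u A xs) ys"
  by (induction xs arbitrary: A) auto

lemma card_remaining: "finite A \<Longrightarrow> card A \<le> card (remaining u A xs) + length xs"
proof (induction xs arbitrary: A)
  case (Cons i xs)
  let ?B = "A - {ARG_MAX (u i) j. j \<in> A}"
  have "card A \<le> card ?B + 1" by (auto simp: card_Diff_singleton_if)
  moreover have "card ?B \<le> card (remaining u ?B xs) + length xs"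
    using Cons.prems by (intro Cons.IH) simp
  ultimately show ?case unfolding remaining.simps length_Cons by linarith
qed simp

lemma remaining_take_antimono:
  assumes "q \<le> m" shows "remaining u A (take m xs) \<subseteq> remaining u A (take q xs)"
proof -
  have "take m xs = take q xs @ take (m - q) (drop q xs)"
    using assms by (metis le_add_diff_inverse take_add)
  then show ?thesis by (simp add: remaining_append remaining_subset)
qed

definition predecessors :: "'a list \<Rightarrow> 'a \<Rightarrow> 'a list" where
  "predecessors \<sigma> i = takeWhile (\<lambda>j. j \<noteq> i) \<sigma>"

lemma split_at_member:
  assumes "i \<in> set \<sigma>"
  obtains post where "\<sigma> = predecessors \<sigma> i @ i # post"
proof -
  obtain y post where "dropWhile (\<lambda>j. j \<noteq> i) \<sigma> = y # post"
    using assms by (cases "dropWhile (\<lambda>j. j \<noteq> i) \<sigma>") auto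
  then have "\<sigma> = predecessors \<sigma> i @ y # post" "y = i"
    unfolding predecessors_def dropWhile_eq_Cons_conv by auto
  then show ?thesis using that by simp
qed

lemma length_orderings: "\<sigma> \<in> orderings n \<Longrightarrow> length \<sigma> = n"
  using distinct_card[of \<sigma>] by (auto simp: orderings_def)

lemma profile_range: "u \<in> profiles n \<Longrightarrow> i < n \<Longrightarrow> j < n \<Longrightarrow> 0 \<le> u i j \<and> u i j \<le> 1"
  unfolding profiles_def valuation_def by auto

text \<open>An ordering splits around agent i as its predecessors, i, and its successors.
  The free variable pre keeps later rewriting with the split equation terminating.\<close>

lemma ordering_split:
  assumes \<sigma>: "\<sigma> \<in> orderings n" and i: "i < n"
  obtains pre post where "\<sigma> = pre @ i # post" "predecessors \<sigma> i = pre"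
    "i \<notin> set pre" "i \<notin> set post" "length pre < n"
proof -
  have "i \<in> set \<sigma>" using \<sigma> i by (auto simp: orderings_def)
  then obtain post where split: "\<sigma> = predecessors \<sigma> i @ i # post" by (rule split_at_member)
  have "distinct \<sigma>" using \<sigma> by (simp add: orderings_def)
  then have "distinct (predecessors \<sigma> i @ i # post)" using arg_cong[OF split, of distinct] by simp
  moreover have "length \<sigma> = n" using length_orderings[OF \<sigma>] .
  then have "length (predecessors \<sigma> i) < n" using arg_cong[OF split, of length] by simp
  ultimately show ?thesis using that[OF split refl] by simp
qed

lemma RP_turn:
  fixes u :: "nat \<Rightarrow> nat \<Rightarrow> real"
  assumes \<sigma>: "\<sigma> \<in> orderings n" and i: "i < n"
  defines "S \<equiv> remaining u {..<n} (predecessors \<sigma> i)"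
  shows "RP n u \<sigma> i \<in> S \<and> (\<forall>y\<in>S. u i y \<le> u i (RP n u \<sigma> i))"
proof -
  obtain pre post where split: "\<sigma> = pre @ i # post" and pre: "predecessors \<sigma> i = pre"
    and post: "i \<notin> set post" and len: "length pre < n"
    using ordering_split[OF \<sigma> i] .
  have "RP n u \<sigma> i = (ARG_MAX (u i) j. j \<in> S)"
    unfolding RP_def S_def pre unfolding split using post by (rule serial_dict_turn)
  moreover have "S \<noteq> {}"
    unfolding S_def pre using card_remaining[of "{..<n}" u pre] len by auto
  moreover have "finite S" unfolding S_def by (meson remaining_subset finite_lessThan finite_subset)
  ultimately show ?thesis using arg_max_on_finite[of S "u i"] by simp
qed

lemma RP_range: "\<sigma> \<in> orderings n \<Longrightarrow> i < n \<Longrightarrow> RP n u \<sigma> i < n"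
  using RP_turn remaining_subset by blast

lemma welfare_RP_ge_available:
  assumes u: "u \<in> profiles n" and \<sigma>: "\<sigma> \<in> orderings n"
  shows "(\<Sum>i<n. of_bool (\<mu> i \<in> remaining u {..<n} (predecessors \<sigma> i)) * u i (\<mu> i))
           \<le> welfare n u (RP n u \<sigma>)"
  unfolding welfare_def
proof (rule sum_mono)
  fix i assume "i \<in> {..<n}"
  then have i: "i < n" by simp
  have "0 \<le> u i (RP n u \<sigma> i)" using profile_range[OF u i RP_range[OF \<sigma> i]] by simp
  then show "of_bool (\<mu> i \<in> remaining u {..<n} (predecessors \<sigma> i)) * u i (\<mu> i) \<le> u i (RP n u \<sigma> i)"
    using RP_turn[OF \<sigma> i, of u] by auto
qed

text \<open>The first agent in the ordering obtains its top item, of value 1.\<close>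

lemma welfare_RP_ge_1:
  assumes u: "u \<in> profiles n" and \<sigma>: "\<sigma> \<in> orderings n" and n: "n \<ge> 1"
  shows "1 \<le> welfare n u (RP n u \<sigma>)"
proof -
  obtain i0 rest where \<sigma>_eq: "\<sigma> = i0 # rest"
    using length_orderings[OF \<sigma>] n by (cases \<sigma>) auto
  have i0: "i0 < n" using \<sigma> \<sigma>_eq unfolding orderings_def by auto
  obtain j where j: "j < n" "u i0 j = 1" using u i0 unfolding profiles_def valuation_def by auto
  have "predecessors \<sigma> i0 = []" unfolding predecessors_def \<sigma>_eq by simp
  then have "u i0 j \<le> u i0 (RP n u \<sigma> i0)" using RP_turn[OF \<sigma> i0, of u] j(1) by simp
  then have "1 \<le> u i0 (RP n u \<sigma> i0)" using j(2) by simp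
  also have "\<dots> \<le> welfare n u (RP n u \<sigma>)" unfolding welfare_def
    by (rule member_le_sum) (use i0 profile_range[OF u] RP_range[OF \<sigma>] in auto)
  finally show ?thesis .
qed

text \<open>Counting orderings: an ordering of the n agents is the same as an ordering of the
  other n - 1 agents together with the position q < n at which agent i is inserted.\<close>

definition insert_at :: "nat \<Rightarrow> 'a \<Rightarrow> 'a list \<Rightarrow> 'a list" where
  "insert_at q i \<tau> = take q \<tau> @ i # drop q \<tau>"

definition orderings_without :: "nat \<Rightarrow> nat \<Rightarrow> nat list set" where
  "orderings_without n i = {\<tau>. distinct \<tau> \<and> set \<tau> = {..<n} - {i}}"

lemma insert_at_props:
  assumes "i \<notin> set \<tau>" "q \<le> length \<tau>"
  shows "predecessors (insert_at q i \<tau>) i = take q \<tau>"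
    and "removeAll i (insert_at q i \<tau>) = \<tau>"
    and "m \<le> q \<Longrightarrow> take m (insert_at q i \<tau>) = take m \<tau>"
    and "i \<in> set (take m (insert_at q i \<tau>)) \<longleftrightarrow> q < m"
proof -
  have notin: "i \<notin> set (take q \<tau>)" "i \<notin> set (drop q \<tau>)"
    using assms(1) by (auto dest: in_set_takeD in_set_dropD)
  show "predecessors (insert_at q i \<tau>) i = take q \<tau>"
    unfolding predecessors_def insert_at_def using notin(1) by (subst takeWhile_append2) auto
  show "removeAll i (insert_at q i \<tau>) = \<tau>"
    unfolding insert_at_def using notin by simp
  show "m \<le> q \<Longrightarrow> take m (insert_at q i \<tau>) = take m \<tau>"
    unfolding insert_at_def using assms(2) by (simp add: min_def)
  show "i \<in> set (take m (insert_at q i \<tau>)) \<longleftrightarrow> q < m"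
  proof (cases "m \<le> q")
    case True
    then have "take m (insert_at q i \<tau>) = take m \<tau>"
      unfolding insert_at_def using assms(2) by (simp add: min_def)
    then show ?thesis using True assms(1) by (auto dest: in_set_takeD)
  next
    case False
    then have "take m (insert_at q i \<tau>) = take q \<tau> @ i # take (m - Suc q) (drop q \<tau>)"
      unfolding insert_at_def using assms(2) by (simp add: min_def take_Cons')
    then show ?thesis using False by simp
  qed
qed

lemma length_orderings_without:
  "i < n \<Longrightarrow> \<tau> \<in> orderings_without n i \<Longrightarrow> length \<tau> = n - 1"
  unfolding orderings_without_def using distinct_card[of \<tau>] by auto

lemma insert_at_orderings:
  assumes i: "i < n" and \<tau>: "\<tau> \<in> orderings_without n i" and q: "q < n"
  shows "insert_at q i \<tau> \<in> orderings n"
proof -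
  have "i \<notin> set \<tau>" "distinct \<tau>" "set \<tau> = {..<n} - {i}"
    using \<tau> unfolding orderings_without_def by auto
  moreover have parts: "set (take q \<tau>) \<union> set (drop q \<tau>) = set \<tau>"
    by (metis append_take_drop_id set_append)
  ultimately show ?thesis
    unfolding orderings_def insert_at_def
    using i set_take_disj_set_drop_if_distinct[of \<tau> q q] by auto
qed

lemma sum_orderings_insert:
  assumes i: "i < n"
  shows "(\<Sum>\<sigma>\<in>orderings n. h \<sigma>) = (\<Sum>\<tau>\<in>orderings_without n i. \<Sum>q<n. h (insert_at q i \<tau>))"
proof -
  have "(\<Sum>\<tau>\<in>orderings_without n i. \<Sum>q<n. h (insert_at q i \<tau>))
      = (\<Sum>(\<tau>, q)\<in>orderings_without n i \<times> {..<n}. h (insert_at q i \<tau>))"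
    by (rule sum.cartesian_product)
  also have "\<dots> = (\<Sum>\<sigma>\<in>orderings n. h \<sigma>)"
  proof (rule sum.reindex_bij_witness[where j = "\<lambda>(\<tau>, q). insert_at q i \<tau>"
                                      and i = "\<lambda>\<sigma>. (removeAll i \<sigma>, length (predecessors \<sigma> i))"])
    fix p assume "p \<in> orderings_without n i \<times> {..<n}"
    then obtain \<tau> q where p: "p = (\<tau>, q)" "\<tau> \<in> orderings_without n i" "q < n" by auto
    have \<tau>: "i \<notin> set \<tau>" "q \<le> length \<tau>"
      using p length_orderings_without[OF i] unfolding orderings_without_def by auto
    show "(\<lambda>\<sigma>. (removeAll i \<sigma>, length (predecessors \<sigma> i))) ((\<lambda>(\<tau>, q). insert_at q i \<tau>) p) = p"
      using insert_at_props[OF \<tau>] \<tau>(2) p(1) by simp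
    show "(\<lambda>(\<tau>, q). insert_at q i \<tau>) p \<in> orderings n"
      using insert_at_orderings[OF i p(2,3)] p(1) by simp
  next
    fix \<sigma> assume \<sigma>: "\<sigma> \<in> orderings n"
    obtain pre post where split: "\<sigma> = pre @ i # post" and pre: "predecessors \<sigma> i = pre"
      and notin: "i \<notin> set pre" "i \<notin> set post" and len: "length pre < n"
      using ordering_split[OF \<sigma> i] .
    show "(\<lambda>(\<tau>, q). insert_at q i \<tau>) ((\<lambda>\<sigma>. (removeAll i \<sigma>, length (predecessors \<sigma> i))) \<sigma>) = \<sigma>"
      unfolding pre unfolding split using notin by (simp add: insert_at_def)
    have "length (predecessors \<sigma> i) < n" using pre len by simp
    moreover have "removeAll i \<sigma> \<in> orderings_without n i"
      using \<sigma> unfolding orderings_def orderings_without_def by (simp add: distinct_removeAll)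
    ultimately show "(\<lambda>\<sigma>. (removeAll i \<sigma>, length (predecessors \<sigma> i))) \<sigma> \<in> orderings_without n i \<times> {..<n}"
      by simp
  qed auto
  finally show ?thesis ..
qed

text \<open>Fix the relative order \<tau> of the other agents.  If item x survives
  the first m picks of \<tau>, it is still available to i whenever i is inserted at one of the
  first m + 1 positions; hence x is available at i's turn in at least m + 1 times as many
  orderings as there are \<tau> in which x survives m picks.\<close>

lemma count_available_at_turn:
  assumes i: "i < n" and m: "m < n"
  shows "real (m + 1) * (\<Sum>\<tau>\<in>orderings_without n i. of_bool (x \<in> remaining u {..<n} (take m \<tau>)))
           \<le> (\<Sum>\<sigma>\<in>orderings n. of_bool (x \<in> remaining u {..<n} (predecessors \<sigma> i)))"
proof -
  let ?avail = "\<lambda>\<tau> q. of_bool (x \<in> remaining u {..<n} (take q \<tau>)) :: real"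
  have "real (m + 1) * ?avail \<tau> m \<le> (\<Sum>q<n. ?avail \<tau> q)" for \<tau>
  proof -
    have "real (m + 1) * ?avail \<tau> m = (\<Sum>q<m + 1. ?avail \<tau> m)" by simp
    also have "\<dots> \<le> (\<Sum>q<m + 1. ?avail \<tau> q)"
      using remaining_take_antimono[of _ m u "{..<n}" \<tau>] by (intro sum_mono) (auto simp: less_Suc_eq_le)
    also have "\<dots> \<le> (\<Sum>q<n. ?avail \<tau> q)"
      by (rule sum_mono2) (use m in auto)
    finally show ?thesis .
  qed
  then have "real (m + 1) * (\<Sum>\<tau>\<in>orderings_without n i. ?avail \<tau> m)
      \<le> (\<Sum>\<tau>\<in>orderings_without n i. \<Sum>q<n. ?avail \<tau> q)"
    unfolding sum_distrib_left by (intro sum_mono)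
  also have "\<dots> = (\<Sum>\<sigma>\<in>orderings n. of_bool (x \<in> remaining u {..<n} (predecessors \<sigma> i)))"
    unfolding sum_orderings_insert[OF i]
  proof (intro sum.cong refl)
    fix \<tau> q assume "\<tau> \<in> orderings_without n i" "q \<in> {..<n}"
    then have "i \<notin> set \<tau>" "q \<le> length \<tau>"
      using length_orderings_without[OF i] unfolding orderings_without_def by auto
    then show "?avail \<tau> q = of_bool (x \<in> remaining u {..<n} (predecessors (insert_at q i \<tau>) i))"
      by (simp add: insert_at_props)
  qed
  finally show ?thesis .
qed

lemma count_available_late:
  assumes i: "i < n"
  shows "(\<Sum>\<sigma>\<in>orderings n. of_bool (i \<notin> set (take m \<sigma>) \<and> x \<in> remaining u {..<n} (take m \<sigma>)))
           \<le> real n * (\<Sum>\<tau>\<in>orderings_without n i. of_bool (x \<in> remaining u {..<n} (take m \<tau>)))"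
proof -
  let ?avail = "\<lambda>\<tau>. of_bool (x \<in> remaining u {..<n} (take m \<tau>)) :: real"
  have "(\<Sum>\<sigma>\<in>orderings n. of_bool (i \<notin> set (take m \<sigma>) \<and> x \<in> remaining u {..<n} (take m \<sigma>)))
      = (\<Sum>\<tau>\<in>orderings_without n i. \<Sum>q<n. of_bool (m \<le> q) * ?avail \<tau>)"
    unfolding sum_orderings_insert[OF i]
  proof (intro sum.cong refl)
    fix \<tau> q assume "\<tau> \<in> orderings_without n i" "q \<in> {..<n}"
    then have "i \<notin> set \<tau>" "q \<le> length \<tau>"
      using length_orderings_without[OF i] unfolding orderings_without_def by auto
    then show "of_bool (i \<notin> set (take m (insert_at q i \<tau>))
                 \<and> x \<in> remaining u {..<n} (take m (insert_at q i \<tau>))) = of_bool (m \<le> q) * ?avail \<tau>"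
      by (auto simp: insert_at_props)
  qed
  also have "\<dots> \<le> (\<Sum>\<tau>\<in>orderings_without n i. \<Sum>q<n. ?avail \<tau>)"
    by (intro sum_mono) auto
  finally show ?thesis by (simp add: sum_distrib_left)
qed

text \<open>After any prefix of agents has picked, at most 2 * length pre agents of the assignment
  \<mu> are spoiled: those in the prefix, and those whose \<mu>-item has been taken (at most one
  per pick, as \<mu> is injective).\<close>

lemma card_spoiled_agents:
  assumes \<mu>: "\<mu> \<in> outcomes n"
  shows "card {i\<in>{..<n}. \<not> (i \<notin> set pre \<and> \<mu> i \<in> remaining u {..<n} pre)} \<le> 2 * length pre"
proof -
  let ?R = "remaining u {..<n} pre"
  have bij: "bij_betw \<mu> {..<n} {..<n}" using \<mu> by (simp add: outcomes_def)
  have "{i\<in>{..<n}. \<not> (i \<notin> set pre \<and> \<mu> i \<in> ?R)} \<subseteq> set pre \<union> {i\<in>{..<n}. \<mu> i \<in> {..<n} - ?R}"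
    using bij by (auto dest: bij_betwE)
  then have "card {i\<in>{..<n}. \<not> (i \<notin> set pre \<and> \<mu> i \<in> ?R)}
      \<le> card (set pre \<union> {i\<in>{..<n}. \<mu> i \<in> {..<n} - ?R})"
    by (intro card_mono) auto
  also have "\<dots> \<le> card (set pre) + card {i\<in>{..<n}. \<mu> i \<in> {..<n} - ?R}"
    by (rule card_Un_le)
  also have "\<dots> \<le> length pre + card ({..<n} - ?R)"
  proof (intro add_mono card_length card_inj_on_le)
    show "inj_on \<mu> {i\<in>{..<n}. \<mu> i \<in> {..<n} - ?R}"
      using bij by (auto simp: bij_betw_def intro: inj_on_subset)
  qed auto
  also have "\<dots> \<le> 2 * length pre"
  proof -
    have "card {..<n} \<le> card ?R + length pre" by (rule card_remaining) simp
    moreover have "finite ?R" by (rule finite_subset[OF remaining_subset]) simp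
    ultimately show ?thesis using card_Diff_subset[OF _ remaining_subset] by simp
  qed
  finally show ?thesis .
qed

text \<open>Hence the agents of \<mu> that come after the prefix and still find their \<mu>-item keep
  welfare at least W(\<mu>) - 2 * length pre, since each spoiled agent contributes at most 1.\<close>

lemma welfare_loss_after_prefix:
  assumes u: "u \<in> profiles n" and \<mu>: "\<mu> \<in> outcomes n"
  shows "welfare n u \<mu> - 2 * real (length pre)
           \<le> (\<Sum>i<n. of_bool (i \<notin> set pre \<and> \<mu> i \<in> remaining u {..<n} pre) * u i (\<mu> i))"
proof -
  let ?good = "\<lambda>i. i \<notin> set pre \<and> \<mu> i \<in> remaining u {..<n} pre"
  have val: "u i (\<mu> i) \<le> 1" if "i < n" for i
    using profile_range[OF u that] \<mu> that unfolding outcomes_def by (auto dest: bij_betwE)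
  have "welfare n u \<mu> = (\<Sum>i<n. of_bool (?good i) * u i (\<mu> i)) + (\<Sum>i<n. of_bool (\<not> ?good i) * u i (\<mu> i))"
    unfolding welfare_def sum.distrib[symmetric] by (intro sum.cong) auto
  moreover have "(\<Sum>i<n. of_bool (\<not> ?good i) * u i (\<mu> i)) \<le> (\<Sum>i<n. of_bool (\<not> ?good i))"
    by (intro sum_mono) (simp add: val)
  moreover have "(\<Sum>i<n. of_bool (\<not> ?good i) :: real) = real (card {i\<in>{..<n}. \<not> ?good i})"
  proof -
    have "{..<n} \<inter> {i. \<not> ?good i} = {i\<in>{..<n}. \<not> ?good i}" by auto
    then show ?thesis by (subst sum_of_bool_eq) simp_all
  qed
  ultimately show ?thesis using card_spoiled_agents[OF \<mu>, of pre u] by linarith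
qed

lemma available_ratio:
  assumes i: "i < n" and m: "m < n"
  shows "real (m + 1) * (\<Sum>\<sigma>\<in>orderings n. of_bool (i \<notin> set (take m \<sigma>) \<and> x \<in> remaining u {..<n} (take m \<sigma>)))
           \<le> real n * (\<Sum>\<sigma>\<in>orderings n. of_bool (x \<in> remaining u {..<n} (predecessors \<sigma> i)))"
proof -
  define X where "X = (\<Sum>\<tau>\<in>orderings_without n i. of_bool (x \<in> remaining u {..<n} (take m \<tau>)) :: real)"
  have "real (m + 1) * (\<Sum>\<sigma>\<in>orderings n. of_bool (i \<notin> set (take m \<sigma>) \<and> x \<in> remaining u {..<n} (take m \<sigma>)))
      \<le> real (m + 1) * (real n * X)"
    unfolding X_def by (intro mult_left_mono count_available_late i) simp
  also have "\<dots> = real n * (real (m + 1) * X)" by simp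
  also have "\<dots> \<le> real n * (\<Sum>\<sigma>\<in>orderings n. of_bool (x \<in> remaining u {..<n} (predecessors \<sigma> i)))"
    unfolding X_def by (intro mult_left_mono count_available_at_turn i m) simp
  finally show ?thesis .
qed

lemma finite_orderings: "finite (orderings n)"
proof -
  have "orderings n \<subseteq> {xs. set xs \<subseteq> {..<n} \<and> distinct xs}" unfolding orderings_def by auto
  then show ?thesis using finite_subset_distinct[of "{..<n}"] finite_subset by blast
qed

lemma card_orderings_pos: "0 < card (orderings n)"
proof -
  have "[0..<n] \<in> orderings n" unfolding orderings_def by auto
  then show ?thesis using finite_orderings card_gt_0_iff by blast
qed

lemma sum_orderings_RP:
  "(\<Sum>\<sigma>\<in>orderings n. welfare n u (RP n u \<sigma>)) = real (card (orderings n)) * RP_expected_welfare n u"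
  unfolding RP_expected_welfare_def using card_orderings_pos[of n] by simp

text \<open>Average the prefix bound over all orderings, exchange the sums over agents and
  orderings, apply the availability ratio agentwise, and compare with RP's welfare.\<close>

lemma outcome_welfare_bound:
  assumes u: "u \<in> profiles n" and \<mu>: "\<mu> \<in> outcomes n" and m: "m < n"
  shows "real (m + 1) * (welfare n u \<mu> - 2 * real m) \<le> real n * RP_expected_welfare n u"
proof -
  define N where "N = real (card (orderings n))"
  define w where "w i = u i (\<mu> i)" for i
  define late where "late i \<sigma> = (of_bool (i \<notin> set (take m \<sigma>) \<and> \<mu> i \<in> remaining u {..<n} (take m \<sigma>)) :: real)"
    for i \<sigma>
  define timely where "timely i \<sigma> = (of_bool (\<mu> i \<in> remaining u {..<n} (predecessors \<sigma> i)) :: real)" for i \<sigma>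
  have w: "0 \<le> w i" if "i < n" for i
    using profile_range[OF u that] \<mu> that unfolding w_def outcomes_def by (auto dest: bij_betwE)
  have "N * (real (m + 1) * (welfare n u \<mu> - 2 * real m))
      = real (m + 1) * (\<Sum>\<sigma>\<in>orderings n. welfare n u \<mu> - 2 * real (length (take m \<sigma>)))"
    using length_orderings[of _ n] m unfolding N_def by (simp add: min_def)
  also have "\<dots> \<le> real (m + 1) * (\<Sum>\<sigma>\<in>orderings n. \<Sum>i<n. late i \<sigma> * w i)"
    unfolding late_def w_def
    by (intro mult_left_mono sum_mono welfare_loss_after_prefix[OF u \<mu>]) simp
  also have "\<dots> = (\<Sum>i<n. w i * (real (m + 1) * (\<Sum>\<sigma>\<in>orderings n. late i \<sigma>)))"
    by (subst sum.swap) (simp add: sum_distrib_left sum_distrib_right mult_ac)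
  also have "\<dots> \<le> (\<Sum>i<n. w i * (real n * (\<Sum>\<sigma>\<in>orderings n. timely i \<sigma>)))"
    unfolding late_def timely_def using available_ratio[OF _ m] w
    by (intro sum_mono mult_left_mono) simp_all
  also have "\<dots> = real n * (\<Sum>\<sigma>\<in>orderings n. \<Sum>i<n. timely i \<sigma> * w i)"
    by (subst sum.swap) (simp add: sum_distrib_left sum_distrib_right mult_ac)
  also have "\<dots> \<le> real n * (\<Sum>\<sigma>\<in>orderings n. welfare n u (RP n u \<sigma>))"
    unfolding timely_def w_def
    by (intro mult_left_mono sum_mono welfare_RP_ge_available[OF u]) simp_all
  also have "\<dots> = N * (real n * RP_expected_welfare n u)"
    unfolding sum_orderings_RP N_def by simp
  finally show ?thesis
    using card_orderings_pos[of n] unfolding N_def by (simp add: mult_le_cancel_left_pos)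
qed

lemma RP_expected_welfare_ge_1:
  assumes u: "u \<in> profiles n" and n: "n \<ge> 1"
  shows "1 \<le> RP_expected_welfare n u"
proof -
  have "(\<Sum>\<sigma>\<in>orderings n. 1) \<le> (\<Sum>\<sigma>\<in>orderings n. welfare n u (RP n u \<sigma>))"
    by (rule sum_mono) (rule welfare_RP_ge_1[OF u _ n])
  then have "real (card (orderings n)) * 1 \<le> (\<Sum>\<sigma>\<in>orderings n. welfare n u (RP n u \<sigma>))"
    by simp
  then show ?thesis
    unfolding sum_orderings_RP using card_orderings_pos[of n] by (simp add: mult_le_cancel_left_pos)
qed

lemma finite_welfare_outcomes: "finite (welfare n u ` outcomes n)"
proof -
  have "welfare n u ` outcomes n \<subseteq> welfare n u ` ({..<n} \<rightarrow>\<^sub>E {..<n})"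
  proof
    fix w assume "w \<in> welfare n u ` outcomes n"
    then obtain \<mu> where \<mu>: "\<mu> \<in> outcomes n" and w: "w = welfare n u \<mu>" by auto
    have "welfare n u \<mu> = welfare n u (restrict \<mu> {..<n})" unfolding welfare_def by simp
    moreover have "restrict \<mu> {..<n} \<in> {..<n} \<rightarrow>\<^sub>E {..<n}"
      using \<mu> unfolding outcomes_def by (auto dest: bij_betwE)
    ultimately show "w \<in> welfare n u ` ({..<n} \<rightarrow>\<^sub>E {..<n})" using w by blast
  qed
  then show ?thesis by (rule finite_subset) (simp add: finite_PiE)
qed

lemma opt_welfare_le:
  assumes "\<And>\<mu>. \<mu> \<in> outcomes n \<Longrightarrow> welfare n u \<mu> \<le> c"
  shows "opt_welfare n u \<le> c"
proof -
  have "id \<in> outcomes n" unfolding outcomes_def by simp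
  then show ?thesis unfolding opt_welfare_def using assms finite_welfare_outcomes
    by (subst Max_le_iff) auto
qed

text \<open>Agent 0 alone can get value 1, so the optimum is positive.\<close>

lemma opt_welfare_ge_1:
  assumes u: "u \<in> profiles n" and n: "n \<ge> 1"
  shows "1 \<le> opt_welfare n u"
proof -
  obtain j where j: "j < n" "u 0 j = 1" using u n unfolding profiles_def valuation_def by fastforce
  define \<mu> where "\<mu> = transpose 0 j"
  have \<mu>: "\<mu> \<in> outcomes n" unfolding outcomes_def \<mu>_def using j n by simp
  have "1 = u 0 (\<mu> 0)" using j unfolding \<mu>_def by simp
  also have "\<dots> \<le> welfare n u \<mu>" unfolding welfare_def
    using \<mu> n profile_range[OF u] unfolding outcomes_def
    by (intro member_le_sum) (auto dest: bij_betwE)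
  also have "\<dots> \<le> opt_welfare n u" unfolding opt_welfare_def
    using finite_welfare_outcomes \<mu> by (intro Max_ge) auto
  finally show ?thesis .
qed

lemma integer_near_sqrt:
  assumes "n \<ge> 1"
  obtains m :: nat where "m < n" "real m \<le> sqrt (real n)" "sqrt (real n) \<le> real m + 1"
proof
  define k where "k = \<lceil>sqrt (real n)\<rceil>"
  define m where "m = nat k - 1"
  have "sqrt (real n) * 1 \<le> sqrt (real n) * sqrt (real n)"
    using assms by (intro mult_left_mono) auto
  then have "sqrt (real n) \<le> real n" by simp
  then have "k \<le> int n" unfolding k_def by (simp add: ceiling_le_iff)
  moreover have "1 \<le> k" using assms unfolding k_def by simp
  moreover have "real_of_int k - 1 < sqrt (real n)" "sqrt (real n) \<le> real_of_int k"
    unfolding k_def using ceiling_correct by auto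
  moreover have "real m = real_of_int k - 1" unfolding m_def using \<open>1 \<le> k\<close> by (simp add: of_nat_diff)
  ultimately show "m < n" "real m \<le> sqrt (real n)" "sqrt (real n) \<le> real m + 1"
    unfolding m_def by linarith+
qed

text \<open>With m \<approx> \<surd>n the main inequality gives OPT \<le> \<surd>n E + 2\<surd>n \<le> 3\<surd>n E, using E \<ge> 1.\<close>

lemma opt_welfare_le_sqrt:
  assumes u: "u \<in> profiles n" and n: "n \<ge> 1"
  shows "opt_welfare n u \<le> 3 * sqrt (real n) * RP_expected_welfare n u"
proof (rule opt_welfare_le)
  fix \<mu> assume \<mu>: "\<mu> \<in> outcomes n"
  define E where "E = RP_expected_welfare n u"
  have E: "1 \<le> E" unfolding E_def using RP_expected_welfare_ge_1[OF u n] .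
  obtain m where m: "m < n" "real m \<le> sqrt (real n)" "sqrt (real n) \<le> real m + 1"
    using integer_near_sqrt[OF n] .
  have "real (m + 1) * (welfare n u \<mu> - 2 * real m) \<le> real n * E"
    unfolding E_def using outcome_welfare_bound[OF u \<mu> m(1)] .
  also have "\<dots> \<le> real (m + 1) * (sqrt (real n) * E)"
  proof -
    have "real n = sqrt (real n) * sqrt (real n)" by simp
    also have "\<dots> \<le> (real m + 1) * sqrt (real n)" using m(3) by (intro mult_right_mono) auto
    finally have "real n * E \<le> ((real m + 1) * sqrt (real n)) * E"
      using E by (intro mult_right_mono) auto
    then show ?thesis by (simp add: algebra_simps)
  qed
  finally have "welfare n u \<mu> - 2 * real m \<le> sqrt (real n) * E"
    by (rule mult_left_le_imp_le) simp
  moreover have "2 * real m \<le> 2 * sqrt (real n) * E"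
    using m(2) E mult_left_mono[OF E, of "sqrt (real n)"] by simp
  ultimately show "welfare n u \<mu> \<le> 3 * sqrt (real n) * E" by linarith
qed

theorem corollary1:
  shows "\<exists>c::real. c > 0 \<and> (\<forall>n::nat. n \<ge> 1 \<longrightarrow> approx_ratio_RP n \<ge> c / sqrt (real n))"
proof (intro exI[of _ "1/3"] conjI allI impI)
  fix n :: nat assume n: "n \<ge> 1"
  have "(\<lambda>i j. 1 / (real j + 1)) \<in> profiles n"
    unfolding profiles_def valuation_def inj_on_def by (auto simp: field_simps)
  then show "(1/3) / sqrt (real n) \<le> approx_ratio_RP n"
    unfolding approx_ratio_RP_def
  proof (rule cINF_greatest[OF ex_in_conv[THEN iffD1, OF exI]])
    fix u assume u: "u \<in> profiles n"
    have "0 < opt_welfare n u" using opt_welfare_ge_1[OF u n] by simp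
    then show "(1/3) / sqrt (real n) \<le> RP_expected_welfare n u / opt_welfare n u"
      using opt_welfare_le_sqrt[OF u n] n by (simp add: field_simps)
  qed
qed simp

end
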